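(* For every integer $k \geq 6$, there exists a stringent graph on $k$ vertices.
   Context: All graphs are finite and simple; $N(u)$ denotes the set of neighbours of a vertex $u$. A set $W\subseteq V(H)$ is homogeneous in $H$ if $N(u)\setminus W=N(v)\setminus W$ for every two distinct vertices $u,v\in W$. A graph $H$ is stringent if it contains no homogeneous set $W$ with $1<|W|\le|V(H)|-1$ and has no non-trivial automorphisms. *)

theory Defs
  imports Main
begin

definition simple_graph :: "'a set \<Rightarrow> ('a \<Rightarrow> 'a \<Rightarrow> bool) \<Rightarrow> bool" where
  "simple_graph V E \<longleftrightarrow> finite V \<and> (\<forall>u v. E u v \<longrightarrow> u \<in> V \<and> v \<in> V)
     \<and> (\<forall>u v. E u v \<longrightarrow> E v u) \<and> (\<forall>u. \<not> E u u)"

definition nbhd :: "'a set \<Rightarrow> ('a \<Rightarrow> 'a \<Rightarrow> bool) \<Rightarrow> 'a \<Rightarrow> 'a set" where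
  "nbhd V E u = {v \<in> V. E u v}"

definition homogeneous :: "'a set \<Rightarrow> ('a \<Rightarrow> 'a \<Rightarrow> bool) \<Rightarrow> 'a set \<Rightarrow> bool" where
  "homogeneous V E W \<longleftrightarrow> W \<subseteq> V \<and>
     (\<forall>u\<in>W. \<forall>v\<in>W. u \<noteq> v \<longrightarrow> nbhd V E u - W = nbhd V E v - W)"

definition automorphism :: "'a set \<Rightarrow> ('a \<Rightarrow> 'a \<Rightarrow> bool) \<Rightarrow> ('a \<Rightarrow> 'a) \<Rightarrow> bool" where
  "automorphism V E f \<longleftrightarrow> bij_betw f V V \<and>
     (\<forall>u\<in>V. \<forall>v\<in>V. E (f u) (f v) \<longleftrightarrow> E u v)"

definition stringent :: "'a set \<Rightarrow> ('a \<Rightarrow> 'a \<Rightarrow> bool) \<Rightarrow> bool" where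
  "stringent V E \<longleftrightarrow>
     (\<nexists>W. homogeneous V E W \<and> 1 < card W \<and> card W \<le> card V - 1) \<and>
     (\<forall>f. automorphism V E f \<longrightarrow> (\<forall>v\<in>V. f v = v))"

end

theory Submission
  imports Defs
begin

text \<open>The witness is the path 0 -- 1 -- ... -- (k-1) with the extra chord 1 -- 3.
It is asymmetric: its only leaves are 0 and k-1, told apart by the degrees of their
neighbours, and once 0 is fixed every vertex is fixed in turn along the path.
It has no proper homogeneous set: two vertices of a homogeneous set W force every vertex
adjacent to exactly one of them into W, so W first contains an edge of the path, then
the edge 0 -- 1, and finally every vertex.\<close>

lemma automorphism_image_nbhd:
  assumes "automorphism V E f" "u \<in> V"
  shows "f ` nbhd V E u = nbhd V E (f u)"
proof -
  have bij: "bij_betw f V V" and adj: "\<forall>u\<in>V. \<forall>v\<in>V. E (f u) (f v) \<longleftrightarrow> E u v"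
    using assms(1) by (auto simp: automorphism_def)
  show ?thesis
  proof
    show "f ` nbhd V E u \<subseteq> nbhd V E (f u)"
      using adj assms(2) bij_betwE[OF bij] by (auto simp: nbhd_def)
    show "nbhd V E (f u) \<subseteq> f ` nbhd V E u"
    proof
      fix w assume "w \<in> nbhd V E (f u)"
      moreover obtain v where "v \<in> V" "w = f v"
        using \<open>w \<in> nbhd V E (f u)\<close> bij by (auto simp: nbhd_def bij_betw_def)
      ultimately show "w \<in> f ` nbhd V E u" using adj assms(2) by (auto simp: nbhd_def)
    qed
  qed
qed

lemma automorphism_card_nbhd:
  assumes "automorphism V E f" "u \<in> V"
  shows "card (nbhd V E (f u)) = card (nbhd V E u)"
proof -
  have "inj_on f (nbhd V E u)"
    using assms(1) by (auto simp: automorphism_def bij_betw_def nbhd_def intro: inj_on_subset)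
  then show ?thesis
    using automorphism_image_nbhd[OF assms] by (metis card_image)
qed

lemma automorphism_fixes_unique_outside_neighbour:
  assumes aut: "automorphism V E f" and fix_S: "\<forall>s\<in>S. f s = s"
    and "u \<in> S" "u \<in> V" "v \<in> V" "E u v" "v \<notin> S"
    and unique: "\<forall>w\<in>V. E u w \<longrightarrow> w \<in> S \<or> w = v"
  shows "f v = v"
proof -
  have bij: "bij_betw f V V" and adj: "\<forall>u\<in>V. \<forall>v\<in>V. E (f u) (f v) \<longleftrightarrow> E u v"
    using aut by (auto simp: automorphism_def)
  have fvV: "f v \<in> V" using bij_betwE[OF bij] assms(5) by blast
  have "E u (f v)" using adj assms(3-6) fix_S by metis
  moreover have "f v \<notin> S"
  proof
    assume "f v \<in> S"
    then have "f (f v) = f v" using fix_S by blast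
    then have "f v = v" using fvV assms(5) bij by (auto simp: bij_betw_def dest: inj_onD)
    then show False using \<open>f v \<in> S\<close> assms(7) by simp
  qed
  ultimately show ?thesis using unique fvV by blast
qed

lemma homogeneous_mem_if_separates:
  assumes "homogeneous V E W" "a \<in> W" "b \<in> W" "a \<noteq> b" "x \<in> V" "E a x" "\<not> E b x"
  shows "x \<in> W"
proof (rule ccontr)
  assume "x \<notin> W"
  then have "x \<in> nbhd V E a - W" using assms(5,6) by (simp add: nbhd_def)
  also have "nbhd V E a - W = nbhd V E b - W"
    using assms(1-4) unfolding homogeneous_def by blast
  finally show False using assms(7) by (simp add: nbhd_def)
qed

lemma stringentI:
  assumes prime: "\<And>W a b. homogeneous V E W \<Longrightarrow> a \<in> W \<Longrightarrow> b \<in> W \<Longrightarrow> a \<noteq> b \<Longrightarrow> V \<subseteq> W"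
    and asym: "\<And>f. automorphism V E f \<Longrightarrow> \<forall>v\<in>V. f v = v"
  shows "stringent V E"
  unfolding stringent_def
proof (intro conjI notI allI impI asym)
  assume "\<exists>W. homogeneous V E W \<and> 1 < card W \<and> card W \<le> card V - 1"
  then obtain W where hom: "homogeneous V E W" and "1 < card W" "card W \<le> card V - 1"
    by blast
  moreover have "W \<subseteq> V" using hom by (simp add: homogeneous_def)
  moreover obtain a b where "a \<in> W" "b \<in> W" "a \<noteq> b"
    using \<open>1 < card W\<close> by (metis One_nat_def card_le_Suc0_iff_eq not_le card.infinite
        less_nat_zero_code)
  ultimately have "W = V" using prime by blast
  then show False using \<open>1 < card W\<close> \<open>card W \<le> card V - 1\<close> by simp
qed

definition chord_path :: "nat \<Rightarrow> nat \<Rightarrow> nat \<Rightarrow> bool" where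
  "chord_path n u v \<longleftrightarrow> u < n \<and> v < n \<and>
     (u = Suc v \<or> v = Suc u \<or> (u = 1 \<and> v = 3) \<or> (u = 3 \<and> v = 1))"

lemma simple_graph_chord_path: "simple_graph {..<n} (chord_path n)"
  by (auto simp: simple_graph_def chord_path_def)

lemma chord_path_card_nbhd_ge_2:
  assumes "0 < j" "j < n - 1"
  shows "card (nbhd {..<n} (chord_path n) j) \<ge> 2"
proof -
  have "{j - 1, j + 1} \<subseteq> nbhd {..<n} (chord_path n) j"
    using assms by (auto simp: nbhd_def chord_path_def)
  moreover have "finite (nbhd {..<n} (chord_path n) j)" by (simp add: nbhd_def)
  ultimately have "card {j - 1, j + 1} \<le> card (nbhd {..<n} (chord_path n) j)"
    by (rule card_mono[rotated])
  then show ?thesis using assms by simp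
qed

lemma chord_path_automorphism_fixes_0:
  assumes n: "n \<ge> 6" and aut: "automorphism {..<n} (chord_path n) f"
  shows "f 0 = 0"
proof (rule ccontr)
  let ?N = "nbhd {..<n} (chord_path n)"
  have adj: "\<forall>u<n. \<forall>v<n. chord_path n (f u) (f v) \<longleftrightarrow> chord_path n u v"
    and f_lt: "\<And>v. v < n \<Longrightarrow> f v < n"
    using aut by (auto simp: automorphism_def bij_betw_def)
  assume "f 0 \<noteq> 0"
  have "card (?N (f 0)) = card (?N 0)" using automorphism_card_nbhd[OF aut] n by simp
  also have "?N 0 = {1}" using n by (auto simp: nbhd_def chord_path_def)
  finally have "f 0 = n - 1"
    using chord_path_card_nbhd_ge_2[of "f 0" n] \<open>f 0 \<noteq> 0\<close> f_lt[of 0] n by fastforce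
  moreover have "chord_path n (f 0) (f 1)" using adj n by (simp add: chord_path_def)
  ultimately have "f 1 = n - 2" using f_lt[of 1] n by (auto simp: chord_path_def)
  have "card (?N (n - 2)) = card (?N 1)"
    using automorphism_card_nbhd[OF aut, of 1] \<open>f 1 = n - 2\<close> n by simp
  moreover have "?N (n - 2) = {n - 3, n - 1}" and "?N 1 = {0, 2, 3}"
    using n by (auto simp: nbhd_def chord_path_def)
  ultimately show False using n by (simp add: card_insert_if)
qed

lemma chord_path_automorphism_fixes_2:
  assumes n: "n \<ge> 6" and aut: "automorphism {..<n} (chord_path n) f"
    and "f 0 = 0" "f 1 = 1"
  shows "f 2 = 2"
proof -
  let ?N = "nbhd {..<n} (chord_path n)"
  have "f ` ?N 1 = ?N 1" using automorphism_image_nbhd[OF aut, of 1] n \<open>f 1 = 1\<close> by simp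
  moreover have "?N 1 = {0, 2, 3}" using n by (auto simp: nbhd_def chord_path_def)
  ultimately have "f 2 \<in> {0, 2, 3}" by blast
  moreover have "f 2 \<noteq> f 0"
    using aut n by (auto simp: automorphism_def bij_betw_def dest: inj_onD)
  moreover have "card (?N (f 2)) = card (?N 2)" using automorphism_card_nbhd[OF aut] n by simp
  moreover have "?N 2 = {1, 3}" and "?N 3 = {1, 2, 4}"
    using n by (auto simp: nbhd_def chord_path_def)
  ultimately show ?thesis using \<open>f 0 = 0\<close> by auto
qed

lemma chord_path_asymmetric:
  assumes n: "n \<ge> 6" and aut: "automorphism {..<n} (chord_path n) f"
  shows "\<forall>v\<in>{..<n}. f v = v"
proof -
  have f0: "f 0 = 0" using chord_path_automorphism_fixes_0[OF assms] .
  have f1: "f 1 = 1"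
    by (rule automorphism_fixes_unique_outside_neighbour[OF aut, of "{0}" 0])
      (use f0 n in \<open>auto simp: chord_path_def\<close>)
  have f2: "f 2 = 2" using chord_path_automorphism_fixes_2[OF assms f0 f1] .
  have "\<forall>i\<le>j. f i = i" if "j < n" for j
    using that
  proof (induction j)
    case 0
    then show ?case using f0 by simp
  next
    case (Suc j)
    have "f (Suc j) = Suc j"
    proof (cases "j < 2")
      case True
      then consider "j = 0" | "j = 1" by linarith
      then show ?thesis using f1 f2 by cases (simp_all add: numeral_2_eq_2)
    next
      case False
      show ?thesis
        by (rule automorphism_fixes_unique_outside_neighbour[OF aut, of "{..j}" j])
          (use Suc False in \<open>auto simp: chord_path_def\<close>)
    qed
    then show ?case using Suc by (auto simp: le_Suc_eq)
  qed
  then show ?thesis by blast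
qed

lemma chord_path_homogeneous_has_edge:
  assumes n: "n \<ge> 6" and hom: "homogeneous {..<n} (chord_path n) W"
    and "u \<in> W" "v \<in> W" "u < v"
  shows "\<exists>i. i \<in> W \<and> Suc i \<in> W \<and> Suc i < n"
proof -
  note sep = homogeneous_mem_if_separates[OF hom]
  have "v < n" using hom \<open>v \<in> W\<close> by (auto simp: homogeneous_def)
  consider "v = Suc u" | "v \<noteq> Suc u" "u > 0" | "u = 0" "v = 2" | "u = 0" "v = 3"
    | "u = 0" "v \<noteq> 1" "v \<noteq> 2" "v \<noteq> 3"
    using \<open>u < v\<close> by linarith
  then show ?thesis
  proof cases
    case 1
    then show ?thesis using assms \<open>v < n\<close> by blast
  next
    case 2
    then have "u - 1 \<in> W"
      using sep[OF \<open>u \<in> W\<close> \<open>v \<in> W\<close>, of "u - 1"] \<open>u < v\<close> \<open>v < n\<close>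
      by (auto simp: chord_path_def)
    then show ?thesis using 2 assms \<open>v < n\<close> by (intro exI[of _ "u - 1"]) auto
  next
    case 3
    then have "3 \<in> W" using sep[OF \<open>v \<in> W\<close> \<open>u \<in> W\<close>, of 3] n
      by (auto simp: chord_path_def)
    then show ?thesis using 3 assms by (intro exI[of _ 2]) auto
  next
    case 4
    then have "4 \<in> W" using sep[OF \<open>v \<in> W\<close> \<open>u \<in> W\<close>, of 4] n
      by (auto simp: chord_path_def)
    then show ?thesis using 4 assms by (intro exI[of _ 3]) auto
  next
    case 5
    then have "1 \<in> W" using sep[OF \<open>u \<in> W\<close> \<open>v \<in> W\<close>, of 1] \<open>u < v\<close> \<open>v < n\<close> n
      by (auto simp: chord_path_def)
    then show ?thesis using 5 assms n by (intro exI[of _ 0]) auto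
  qed
qed

lemma chord_path_homogeneous_edge_imp_0_1:
  assumes n: "n \<ge> 6" and hom: "homogeneous {..<n} (chord_path n) W"
  shows "i \<in> W \<Longrightarrow> Suc i \<in> W \<Longrightarrow> Suc i < n \<Longrightarrow> 0 \<in> W \<and> 1 \<in> W"
proof (induction i)
  case 0
  then show ?case by simp
next
  note sep = homogeneous_mem_if_separates[OF hom]
  case (Suc i)
  show ?case
  proof (cases "i = 1")
    case True
    \<comment> \<open>the chord makes 1 adjacent to both 2 and 3, so the detour goes through 4\<close>
    have "2 \<in> W" and "3 \<in> W" using Suc.prems True by (simp_all add: numeral_eq_Suc)
    then have "4 \<in> W" using sep[OF \<open>3 \<in> W\<close> \<open>2 \<in> W\<close>, of 4] n by (auto simp: chord_path_def)
    then have "1 \<in> W" using sep[OF \<open>3 \<in> W\<close> \<open>4 \<in> W\<close>, of 1] n by (auto simp: chord_path_def)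
    then show ?thesis using Suc.IH True \<open>2 \<in> W\<close> n by (simp add: numeral_eq_Suc)
  next
    case False
    then have "i \<in> W" using sep[OF Suc.prems(1,2), of i] Suc.prems by (auto simp: chord_path_def)
    then show ?thesis using Suc.IH Suc.prems by simp
  qed
qed

lemma chord_path_homogeneous_from_0_1:
  assumes n: "n \<ge> 6" and hom: "homogeneous {..<n} (chord_path n) W"
    and "0 \<in> W" "1 \<in> W"
  shows "{..<n} \<subseteq> W"
proof -
  note sep = homogeneous_mem_if_separates[OF hom]
  have "j < n \<longrightarrow> j \<in> W" for j
  proof (induction j rule: less_induct)
    case (less j)
    show ?case
    proof
      assume "j < n"
      consider "j \<le> 1" | "j = 2" | "j = 3" | "j \<ge> 4" by linarith
      then show "j \<in> W"
      proof cases
        case 1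
        then show ?thesis using assms(3,4) by (auto simp: le_Suc_eq)
      next
        case 2
        then show ?thesis using sep[OF assms(4,3), of 2] n by (auto simp: chord_path_def)
      next
        case 3
        then show ?thesis using sep[OF assms(4,3), of 3] n by (auto simp: chord_path_def)
      next
        case 4
        then have "j - 1 \<in> W" "j - 2 \<in> W" using less.IH \<open>j < n\<close> by auto
        moreover have "chord_path n (j - 1) j" "\<not> chord_path n (j - 2) j"
          using \<open>j < n\<close> 4 unfolding chord_path_def by arith+
        ultimately show ?thesis using sep[of "j - 1" "j - 2" j] 4 \<open>j < n\<close> by simp
      qed
    qed
  qed
  then show ?thesis by blast
qed

lemma chord_path_prime:
  assumes n: "n \<ge> 6" and hom: "homogeneous {..<n} (chord_path n) W"
    and "a \<in> W" "b \<in> W" "a \<noteq> b"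
  shows "{..<n} \<subseteq> W"
proof -
  obtain i where "i \<in> W" "Suc i \<in> W" "Suc i < n"
    using chord_path_homogeneous_has_edge[OF n hom] assms(3-5) by (metis linorder_neqE_nat)
  then show ?thesis
    using chord_path_homogeneous_edge_imp_0_1[OF n hom] chord_path_homogeneous_from_0_1[OF n hom]
    by blast
qed

theorem lemma4p2:
  fixes k :: nat
  assumes "k \<ge> 6"
  shows "\<exists>(V :: nat set) E. simple_graph V E \<and> card V = k \<and> stringent V E"
proof (intro exI conjI)
  show "simple_graph {..<k} (chord_path k)" by (rule simple_graph_chord_path)
  show "card {..<k} = k" by simp
  show "stringent {..<k} (chord_path k)"
    using chord_path_prime[OF assms] chord_path_asymmetric[OF assms] by (intro stringentI) auto
qed

end
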